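(* Let $G(q,x):=\sum_{j=-\infty}^{-1}q^{j(j+1)/2}x^j$. For $q\in[0,1]$ and $x\in\mathbb{C}$ with $|x|=a>2$, one has $|G(q,x)|\geq (a-2)/(a(a-1))$. In particular, for $|x|=3$, $|G(q,x)|\geq 1/6$.
   Context: Here $q^0$ is interpreted as $1$ (also for $q=0$), so the term $j=-1$ of $G$ equals $1/x$. *)

theory Defs
  imports Complex_Main
begin

text \<open>Substituting j = -(n+1) with n \<ge> 0 gives j(j+1)/2 = n(n+1)/2 and x^j = 1/x^(n+1).
  The nat power convention 0^0 = 1 matches the paper's convention q^0 = 1.\<close>
definition G :: "real \<Rightarrow> complex \<Rightarrow> complex" where
  "G q x = (\<Sum>n. complex_of_real q ^ (n * (n + 1) div 2) / x ^ Suc n)"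

end

theory Submission
  imports Defs
begin

text \<open>The term j = -1 of G(q,x) is 1/x, of modulus 1/a = 1/|x|. Since |q| \<le> 1, every other
  term is bounded in modulus by the corresponding term of the geometric series
  \<Sum>n\<ge>2. a^-n = 1/(a(a-1)), so |G(q,x)| \<ge> 1/a - 1/(a(a-1)) = (a-2)/(a(a-1)).\<close>

lemma geometric_majorant:
  fixes f :: "nat \<Rightarrow> 'a::banach"
  assumes f_le: "\<And>n. norm (f n) \<le> c * r ^ n" and "0 \<le> r" and "r < 1"
  shows summable_geometric_majorant: "summable f"
    and norm_suminf_le_geometric_majorant: "norm (suminf f) \<le> c / (1 - r)"
proof -
  have geom: "summable (\<lambda>n. c * r ^ n)"
    using assms by simp
  have norm_summable: "summable (\<lambda>n. norm (f n))"
    by (rule summable_comparison_test[OF _ geom]) (use f_le in auto)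
  then show "summable f"
    by (rule summable_norm_cancel)
  have "norm (suminf f) \<le> (\<Sum>n. norm (f n))"
    by (rule summable_norm[OF norm_summable])
  also have "\<dots> \<le> (\<Sum>n. c * r ^ n)"
    by (rule suminf_le[OF f_le norm_summable geom])
  also have "\<dots> = c / (1 - r)"
    using suminf_mult[of "\<lambda>n. r ^ n" c] suminf_geometric[of r] assms by simp
  finally show "norm (suminf f) \<le> c / (1 - r)" .
qed

lemma norm_G_term_le:
  fixes q :: real and x :: complex
  assumes "\<bar>q\<bar> \<le> 1"
  shows "norm (complex_of_real q ^ k / x ^ n) \<le> inverse (norm x) ^ n"
proof -
  have "norm (complex_of_real q ^ k / x ^ n) = norm (complex_of_real q ^ k) / norm x ^ n"
    by (simp add: norm_divide norm_power)
  also have "\<dots> \<le> 1 / norm x ^ n"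
    using assms by (intro divide_right_mono) (simp_all add: norm_power power_le_one)
  finally show ?thesis
    by (simp add: inverse_eq_divide power_one_over)
qed

lemma norm_G_minus_inverse_le:
  fixes q :: real and x :: complex
  assumes "\<bar>q\<bar> \<le> 1" and "norm x > 1"
  shows "norm (G q x - 1 / x) \<le> 1 / (norm x * (norm x - 1))"
proof -
  define t where "t n = complex_of_real q ^ (n * (n + 1) div 2) / x ^ Suc n" for n
  define r where "r = inverse (norm x)"
  have r: "0 \<le> r" "r < 1"
    using assms(2) by (auto simp: r_def inverse_less_1_iff)
  have t_le: "norm (t n) \<le> r ^ Suc n" for n
    unfolding t_def r_def by (rule norm_G_term_le[OF assms(1)])
  then have "norm (t n) \<le> r * r ^ n" for n
    by simp
  then have "summable t"
    using r by (rule summable_geometric_majorant)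
  then have "G q x = t 0 + (\<Sum>n. t (Suc n))"
    unfolding G_def t_def[symmetric] by (simp add: suminf_split_head)
  moreover have "t 0 = 1 / x"
    by (simp add: t_def)
  moreover have "norm (t (Suc n)) \<le> r ^ 2 * r ^ n" for n
    using t_le[of "Suc n"] by (simp add: power2_eq_square)
  then have "norm (\<Sum>n. t (Suc n)) \<le> r ^ 2 / (1 - r)"
    using r by (rule norm_suminf_le_geometric_majorant)
  moreover have "r ^ 2 / (1 - r) = 1 / (norm x * (norm x - 1))"
    using assms(2) by (simp add: r_def field_simps power2_eq_square)
  ultimately show ?thesis
    by simp
qed

lemma norm_G_ge:
  fixes q :: real and x :: complex
  assumes "\<bar>q\<bar> \<le> 1" and "norm x > 2"
  shows "norm (G q x) \<ge> (norm x - 2) / (norm x * (norm x - 1))"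
proof -
  have "norm (1 / x) - norm (G q x - 1 / x) \<le> norm (G q x)"
    by (metis add_diff_cancel_left' diff_add_cancel norm_diff_ineq norm_minus_commute)
  moreover have "norm (G q x - 1 / x) \<le> 1 / (norm x * (norm x - 1))"
    using assms by (intro norm_G_minus_inverse_le) auto
  moreover have "norm (1 / x) - 1 / (norm x * (norm x - 1)) = (norm x - 2) / (norm x * (norm x - 1))"
    using assms(2) by (simp add: norm_divide divide_simps)
  ultimately show ?thesis
    by linarith
qed

theorem lemma1:
  fixes q :: real
  assumes "0 \<le> q" and "q \<le> 1"
  shows "(\<forall>(x::complex) a. norm x = a \<longrightarrow> a > 2 \<longrightarrow>
            norm (G q x) \<ge> (a - 2) / (a * (a - 1)))
       \<and> (\<forall>x::complex. norm x = 3 \<longrightarrow> norm (G q x) \<ge> 1 / 6)"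
proof -
  have q: "\<bar>q\<bar> \<le> 1"
    using assms by simp
  have "norm (G q x) \<ge> 1 / 6" if "norm x = 3" for x :: complex
    using norm_G_ge[OF q, of x] that by simp
  then show ?thesis
    using norm_G_ge[OF q] by auto
qed

end
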